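(* Consider the online submodular partition problem (notation in context) with $m\ge 2$ users, in which resources arrive one at a time in an arbitrary order $j_1,\dots,j_n$ (a permutation of $\mathcal{R}$) and each must be irrevocably assigned on arrival. Let $G$ be the output of GREEDY-ON on this arrival order, with $u_t$ the user chosen at time $t$, $d^o_t$ the discriminant at time $t$ and $c_{u_t}$ the curvature of $Z_{u_t}$. Let $\Omega$ be an optimal (offline) partition with $Z(\Omega)>0$. Then for every arrival order, $$\frac{Z(G)}{Z(\Omega)}\ \ge\ \min\left(1,\ \frac{1}{\max_{1\le t\le n}\left\{\frac{1}{d^o_t}+c_{u_t}\right\}}\right),$$ with conventions $1/\infty=0$, $1/0=\infty$. Consequently the competitive ratio of GREEDY-ON is at least the minimum over arrival orders of the right-hand side.
   Context: Resources $\mathcal{R}$, $|\mathcal{R}|=n$; users $\mathcal{U}$, $|\mathcal{U}|=m$; each user $u$ has a monotone submodular $Z_u:2^{\mathcal{R}}\to\mathbb{R}$ with $Z_u(\emptyset)=0$. For $S\subseteq\mathcal{U}\times\mathcal{R}$, $S_u=\{r:(u,r)\in S\}$ and $Z(S)=\sum_u Z_u(S_u)$. A partition assigns each resource to exactly one user (a set of pairs in which each resource appears exactly once); $\Omega$ is a partition maximizing $Z$. $\rho^u_r(S)=Z_u(S_u\cup\{r\})-Z_u(S_u)$. Curvature of $Z_u$: $c_u=1-\min\{(Z_u(S\cup\{r\})-Z_u(S))/Z_u(\{r\}): S\subseteq\mathcal{R}, r\in\mathcal{R}\setminus S, Z_u(\{r\})>0\}$. GREEDY-ON: $G^0=\emptyset$;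 at time $t=1,\dots,n$, when resource $j_t$ arrives, assign it to a user $u_t\in\arg\max_u\rho^u_{j_t}(G^{t-1})$, breaking ties in favour of the user with least curvature $c_u$; set $G^t=G^{t-1}\cup\{(u_t,j_t)\}$; output $G=G^n$. Discriminant at time $t$: $d^o_t=\rho^{u_t}_{j_t}(G^{t-1})/\max_{u'\neq u_t}\rho^{u'}_{j_t}(G^{t-1})$ (set to $\infty$ if the denominator is $0$). *)

theory Defs
  imports Complex_Main "HOL-Library.Extended_Real"
begin

definition monotone_submod :: "'r set \<Rightarrow> ('r set \<Rightarrow> real) \<Rightarrow> bool" where
  "monotone_submod R f \<longleftrightarrow>
     f {} = 0 \<and>
     (\<forall>A B. A \<subseteq> B \<and> B \<subseteq> R \<longrightarrow> f A \<le> f B) \<and>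
     (\<forall>A B x. A \<subseteq> B \<and> B \<subseteq> R \<and> x \<in> R - B \<longrightarrow>
        f (B \<union> {x}) - f B \<le> f (A \<union> {x}) - f A)"

definition user_part :: "('u \<times> 'r) set \<Rightarrow> 'u \<Rightarrow> 'r set" where
  "user_part S u = {r. (u, r) \<in> S}"

definition Ztot :: "'u set \<Rightarrow> ('u \<Rightarrow> 'r set \<Rightarrow> real) \<Rightarrow> ('u \<times> 'r) set \<Rightarrow> real" where
  "Ztot U Z S = (\<Sum>u\<in>U. Z u (user_part S u))"

definition rho :: "('u \<Rightarrow> 'r set \<Rightarrow> real) \<Rightarrow> 'u \<Rightarrow> 'r \<Rightarrow> ('u \<times> 'r) set \<Rightarrow> real" where
  "rho Z u r S = Z u (user_part S u \<union> {r}) - Z u (user_part S u)"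

definition is_partition :: "'u set \<Rightarrow> 'r set \<Rightarrow> ('u \<times> 'r) set \<Rightarrow> bool" where
  "is_partition U R S \<longleftrightarrow> S \<subseteq> U \<times> R \<and> (\<forall>r\<in>R. \<exists>!u. (u, r) \<in> S)"

definition optimal_partition ::
  "'u set \<Rightarrow> 'r set \<Rightarrow> ('u \<Rightarrow> 'r set \<Rightarrow> real) \<Rightarrow> ('u \<times> 'r) set \<Rightarrow> bool" where
  "optimal_partition U R Z \<Omega> \<longleftrightarrow> is_partition U R \<Omega> \<and>
     (\<forall>S. is_partition U R S \<longrightarrow> Ztot U Z S \<le> Ztot U Z \<Omega>)"

(* curvature c_u = 1 - min { (f(S \<union> {r}) - f S) / f {r} : S \<subseteq> R, r \<in> R - S, f {r} > 0 };
   convention: 0 if no r has f {r} > 0 (then f is identically zero) *)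
definition curv_set :: "'r set \<Rightarrow> ('r set \<Rightarrow> real) \<Rightarrow> real set" where
  "curv_set R f = {(f (S \<union> {r}) - f S) / f {r} | S r. S \<subseteq> R \<and> r \<in> R - S \<and> f {r} > 0}"

definition curvature :: "'r set \<Rightarrow> ('r set \<Rightarrow> real) \<Rightarrow> real" where
  "curvature R f = (if curv_set R f = {} then 0 else 1 - Min (curv_set R f))"

(* greedy partial assignment G^t (times indexed from 0): first t arrivals *)
definition Gt :: "'u list \<Rightarrow> 'r list \<Rightarrow> nat \<Rightarrow> ('u \<times> 'r) set" where
  "Gt us js t = {(us ! i, js ! i) | i. i < t}"

(* us is a valid run of GREEDY-ON on arrival order js:
   at time t, resource js!t goes to us!t, a maximiser of the marginal gain,
   ties broken in favour of least curvature (remaining ties arbitrary) *)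
definition greedy_on_run ::
  "'u set \<Rightarrow> 'r set \<Rightarrow> ('u \<Rightarrow> 'r set \<Rightarrow> real) \<Rightarrow> 'r list \<Rightarrow> 'u list \<Rightarrow> bool" where
  "greedy_on_run U R Z js us \<longleftrightarrow> length us = length js \<and>
     (\<forall>t < length js. us ! t \<in> U \<and>
        (\<forall>u\<in>U. rho Z u (js ! t) (Gt us js t) \<le> rho Z (us ! t) (js ! t) (Gt us js t)) \<and>
        (\<forall>u\<in>U. rho Z u (js ! t) (Gt us js t) = rho Z (us ! t) (js ! t) (Gt us js t)
              \<longrightarrow> curvature R (Z (us ! t)) \<le> curvature R (Z u)))"

definition discriminant ::
  "'u set \<Rightarrow> ('u \<Rightarrow> 'r set \<Rightarrow> real) \<Rightarrow> 'r list \<Rightarrow> 'u list \<Rightarrow> nat \<Rightarrow> ereal" where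
  "discriminant U Z js us t =
     (let num = rho Z (us ! t) (js ! t) (Gt us js t);
          den = Max ((\<lambda>u'. rho Z u' (js ! t) (Gt us js t)) ` (U - {us ! t}))
      in if den = 0 then \<infinity> else ereal (num / den))"

end

theory Submission
  imports Defs
begin

text \<open>
  Compare the greedy assignment with the hybrid assignment that agrees with the greedy one on the
  resources that have already arrived and with \<open>\<Omega>\<close> on the others. When resource \<open>j\<^sub>t\<close> arrives,
  moving it from its optimal owner to the greedy user \<open>u\<^sub>t\<close> changes the hybrid value by at least
  \<open>(1 - c\<^sub>u\<^sub>t) \<rho>\<^sub>t - \<rho>\<^sub>t / d\<^sup>o\<^sub>t\<close>, where \<open>\<rho>\<^sub>t\<close> is the greedy gain: curvature bounds the gain of \<open>u\<^sub>t\<close>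
  from below, submodularity bounds the loss of the optimal owner by its marginal value on \<open>G\<^sup>t\<^sup>-\<^sup>1\<close>,
  which is at most \<open>\<rho>\<^sub>t / d\<^sup>o\<^sub>t\<close>. With \<open>K = max 1 (max\<^sub>t (1/d\<^sup>o\<^sub>t + c\<^sub>u\<^sub>t))\<close> every step loses at most
  \<open>(K - 1) \<rho>\<^sub>t\<close>, and the \<open>\<rho>\<^sub>t\<close> sum to \<open>Z(G)\<close>; since the hybrid starts at \<open>\<Omega>\<close> and ends at \<open>G\<close>,
  this gives \<open>Z(\<Omega>) \<le> K Z(G)\<close>.
\<close>

lemma monotone_submodD_mono:
  "monotone_submod R f \<Longrightarrow> A \<subseteq> B \<Longrightarrow> B \<subseteq> R \<Longrightarrow> f A \<le> f B"
  unfolding monotone_submod_def by blast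

lemma monotone_submodD_submod:
  "monotone_submod R f \<Longrightarrow> A \<subseteq> B \<Longrightarrow> B \<subseteq> R \<Longrightarrow> x \<in> R - B \<Longrightarrow>
     f (B \<union> {x}) - f B \<le> f (A \<union> {x}) - f A"
  unfolding monotone_submod_def by blast

lemma monotone_submod_empty: "monotone_submod R f \<Longrightarrow> f {} = 0"
  unfolding monotone_submod_def by blast

lemma monotone_submod_le_insert:
  "monotone_submod R f \<Longrightarrow> A \<subseteq> R \<Longrightarrow> x \<in> R \<Longrightarrow> f A \<le> f (A \<union> {x})"
  using monotone_submodD_mono[of R f A "A \<union> {x}"] by blast

lemma monotone_submod_marginal_le_singleton:
  assumes "monotone_submod R f" "B \<subseteq> R" "x \<in> R - B"
  shows "f (B \<union> {x}) - f B \<le> f {x}"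
  using monotone_submodD_submod[OF assms(1), of "{}" B x] assms monotone_submod_empty[OF assms(1)]
  by simp

lemma finite_curv_set: "finite R \<Longrightarrow> finite (curv_set R f)"
proof -
  assume "finite R"
  have "curv_set R f \<subseteq> (\<lambda>(S, r). (f (S \<union> {r}) - f S) / f {r}) ` (Pow R \<times> R)"
    unfolding curv_set_def by auto
  moreover have "finite (Pow R \<times> R)"
    using \<open>finite R\<close> by simp
  ultimately show ?thesis
    by (meson finite_surj)
qed

lemma curvature_le_1:
  assumes "monotone_submod R f" "finite R"
  shows "curvature R f \<le> 1"
proof (cases "curv_set R f = {}")
  case False
  then have "Min (curv_set R f) \<in> curv_set R f"
    using finite_curv_set[OF assms(2)] by simp
  then obtain S r where "Min (curv_set R f) = (f (S \<union> {r}) - f S) / f {r}"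
      and "S \<subseteq> R" "r \<in> R - S" "f {r} > 0"
    unfolding curv_set_def by blast
  moreover have "f S \<le> f (S \<union> {r})"
    using monotone_submod_le_insert[OF assms(1)] \<open>S \<subseteq> R\<close> \<open>r \<in> R - S\<close> by blast
  ultimately show ?thesis
    using False unfolding curvature_def by simp
qed (simp add: curvature_def)

lemma curvature_marginal_lower_bound:
  assumes f: "monotone_submod R f" and "finite R" and "A \<subseteq> R" and x: "x \<in> R - A"
    and "B \<subseteq> A"
  shows "(1 - curvature R f) * (f (B \<union> {x}) - f B) \<le> f (A \<union> {x}) - f A"
proof -
  have gain_B: "f (B \<union> {x}) - f B \<le> f {x}"
    using monotone_submod_marginal_le_singleton[OF f, of B x] assms by auto
  have gain_A: "f A \<le> f (A \<union> {x})"
    using monotone_submod_le_insert[OF f] assms by blast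
  show ?thesis
  proof (cases "f {x} > 0")
    case True
    have ratio: "(f (A \<union> {x}) - f A) / f {x} \<in> curv_set R f"
      unfolding curv_set_def using assms True by blast
    then have "1 - curvature R f \<le> (f (A \<union> {x}) - f A) / f {x}"
      unfolding curvature_def using finite_curv_set[OF \<open>finite R\<close>] by auto
    then have "(1 - curvature R f) * f {x} \<le> f (A \<union> {x}) - f A"
      using True by (simp add: pos_le_divide_eq)
    moreover have "(1 - curvature R f) * (f (B \<union> {x}) - f B) \<le> (1 - curvature R f) * f {x}"
      using gain_B curvature_le_1[OF f \<open>finite R\<close>] by (simp add: mult_left_mono)
    ultimately show ?thesis by linarith
  next
    case False
    have "f {} \<le> f {x}"
      using monotone_submodD_mono[OF f, of "{}" "{x}"] x by auto
    then have "f {x} = 0"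
      using False monotone_submod_empty[OF f] by simp
    moreover have "f B \<le> f (B \<union> {x})"
      using monotone_submod_le_insert[OF f] assms by blast
    ultimately show ?thesis
      using gain_A gain_B by simp
  qed
qed

lemma user_part_mono: "T \<subseteq> S \<Longrightarrow> user_part T u \<subseteq> user_part S u"
  unfolding user_part_def by auto

lemma user_part_insert:
  "user_part (insert (u, r) S) v = user_part S v \<union> (if v = u then {r} else {})"
  unfolding user_part_def by auto

lemma Ztot_insert:
  assumes "finite U" "u \<in> U"
  shows "Ztot U Z (insert (u, r) S) = Ztot U Z S + rho Z u r S"
proof -
  have "Ztot U Z (insert (u, r) S) =
      (\<Sum>v\<in>U. Z v (user_part S v) + (if v = u then rho Z u r S else 0))"
    unfolding Ztot_def rho_def by (rule sum.cong) (auto simp: user_part_insert)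
  then show ?thesis
    using assms by (simp add: sum.distrib Ztot_def)
qed

lemma Ztot_empty:
  assumes "\<forall>u\<in>U. monotone_submod R (Z u)"
  shows "Ztot U Z {} = 0"
  using assms unfolding Ztot_def user_part_def by (simp add: monotone_submod_empty[of R])

lemma rho_nonneg:
  "monotone_submod R (Z u) \<Longrightarrow> user_part S u \<subseteq> R \<Longrightarrow> r \<in> R \<Longrightarrow> 0 \<le> rho Z u r S"
  unfolding rho_def using monotone_submod_le_insert[of R "Z u" "user_part S u" r] by simp

lemma rho_antimono:
  assumes "monotone_submod R (Z u)" "T \<subseteq> S" "user_part S u \<subseteq> R" "r \<in> R - user_part S u"
  shows "rho Z u r S \<le> rho Z u r T"
  unfolding rho_def by (rule monotone_submodD_submod[OF assms(1) user_part_mono[OF assms(2)] assms(3,4)])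

lemma rho_curvature_lower_bound:
  assumes "monotone_submod R (Z u)" "finite R" "T \<subseteq> S" "user_part S u \<subseteq> R"
    "r \<in> R - user_part S u"
  shows "(1 - curvature R (Z u)) * rho Z u r T \<le> rho Z u r S"
  unfolding rho_def
  using curvature_marginal_lower_bound[OF assms(1,2,4,5) user_part_mono[OF assms(3)]] .

lemma Gt_0: "Gt us js 0 = {}"
  unfolding Gt_def by simp

lemma Gt_Suc: "Gt us js (Suc k) = insert (us ! k, js ! k) (Gt us js k)"
  unfolding Gt_def by (auto simp: less_Suc_eq)

lemma ereal_ratio_ge_min_1_inverse:
  fixes a b M :: real
  assumes "0 < b" and "b \<le> max 1 M * a"
  shows "min 1 (inverse (ereal M)) \<le> ereal (a / b)"
proof (cases "M \<le> 1")
  case True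
  then have "1 \<le> a / b"
    using assms by simp
  then have "1 \<le> ereal (a / b)"
    by simp
  then show ?thesis
    by (meson min.cobounded1 order_trans)
next
  case False
  then have "inverse M \<le> a / b"
    using assms by (simp add: field_simps)
  then show ?thesis
    using False by (simp add: min.coboundedI2)
qed

locale greedy_on =
  fixes U :: "'u set" and R :: "'r set" and Z :: "'u \<Rightarrow> 'r set \<Rightarrow> real"
    and js :: "'r list" and us :: "'u list"
  assumes finite_U: "finite U" and two_users: "card U \<ge> 2" and finite_R: "finite R"
    and submod: "\<forall>u\<in>U. monotone_submod R (Z u)"
    and distinct_js: "distinct js" and set_js: "set js = R"
    and run: "greedy_on_run U R Z js us"
begin

abbreviation "n \<equiv> length js"

abbreviation "G \<equiv> Gt us js"

definition gain :: "nat \<Rightarrow> real" where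
  "gain t = rho Z (us ! t) (js ! t) (G t)"

definition rival :: "nat \<Rightarrow> real" where
  "rival t = Max ((\<lambda>u'. rho Z u' (js ! t) (G t)) ` (U - {us ! t}))"

text \<open>The real number \<open>1/d\<^sup>o\<^sub>t\<close>; it is \<open>0\<close> exactly when \<open>d\<^sup>o\<^sub>t = \<infinity>\<close>.\<close>

definition rival_ratio :: "nat \<Rightarrow> real" where
  "rival_ratio t = (if rival t = 0 then 0 else rival t / gain t)"

definition cost :: "nat \<Rightarrow> real" where
  "cost t = rival_ratio t + curvature R (Z (us ! t))"

definition future :: "('u \<times> 'r) set \<Rightarrow> nat \<Rightarrow> ('u \<times> 'r) set" where
  "future \<Omega> k = {p \<in> \<Omega>. snd p \<in> set (drop k js)}"

definition hybrid :: "('u \<times> 'r) set \<Rightarrow> nat \<Rightarrow> ('u \<times> 'r) set" where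
  "hybrid \<Omega> k = G k \<union> future \<Omega> k"

lemma user_in_U: "t < n \<Longrightarrow> us ! t \<in> U"
  using run unfolding greedy_on_run_def by auto

lemma gain_maximal: "t < n \<Longrightarrow> u \<in> U \<Longrightarrow> rho Z u (js ! t) (G t) \<le> gain t"
  using run unfolding greedy_on_run_def gain_def by auto

lemma arrival_in_R: "t < n \<Longrightarrow> js ! t \<in> R"
  using set_js by auto

lemma user_part_G_subset: "k \<le> n \<Longrightarrow> user_part (G k) u \<subseteq> R"
  unfolding Gt_def user_part_def using arrival_in_R by fastforce

lemma arrival_not_in_G: "t < n \<Longrightarrow> js ! t \<notin> user_part (G t) u"
  unfolding Gt_def user_part_def using distinct_js by (auto simp: nth_eq_iff_index_eq)

lemma arrival_not_in_future_Suc: "t < n \<Longrightarrow> js ! t \<notin> set (drop (Suc t) js)"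
  using distinct_js by (auto simp: in_set_conv_nth nth_eq_iff_index_eq)

lemma rho_arrival_nonneg: "t < n \<Longrightarrow> u \<in> U \<Longrightarrow> 0 \<le> rho Z u (js ! t) (G t)"
  using rho_nonneg[of R Z u] submod user_part_G_subset[of t u] arrival_in_R[of t] by simp

lemma gain_nonneg: "t < n \<Longrightarrow> 0 \<le> gain t"
  using rho_arrival_nonneg user_in_U unfolding gain_def by blast

lemma rival_ge: "t < n \<Longrightarrow> u \<in> U - {us ! t} \<Longrightarrow> rho Z u (js ! t) (G t) \<le> rival t"
  unfolding rival_def using finite_U by (intro Max_ge) auto

lemma rival_bounds:
  assumes "t < n"
  shows "0 \<le> rival t" "rival t \<le> gain t"
proof -
  have "\<not> U \<subseteq> {us ! t}"
    using two_users card_mono[of "{us ! t}" U] by auto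
  then have "U - {us ! t} \<noteq> {}"
    by blast
  then have "rival t \<in> (\<lambda>u'. rho Z u' (js ! t) (G t)) ` (U - {us ! t})"
    unfolding rival_def using finite_U by (intro Max_in) auto
  then obtain v where "v \<in> U - {us ! t}" "rival t = rho Z v (js ! t) (G t)"
    by blast
  then show "0 \<le> rival t" "rival t \<le> gain t"
    using rho_arrival_nonneg gain_maximal assms by auto
qed

lemma rival_le_ratio_gain: "t < n \<Longrightarrow> rival t \<le> rival_ratio t * gain t"
  using rival_bounds[of t] unfolding rival_ratio_def by auto

lemma inverse_discriminant: "t < n \<Longrightarrow> inverse (discriminant U Z js us t) = ereal (rival_ratio t)"
  using rival_bounds[of t]
  by (auto simp: discriminant_def rival_ratio_def rival_def gain_def Let_def)

lemma inverse_discriminant_plus_curvature: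
  "t < n \<Longrightarrow> inverse (discriminant U Z js us t) + ereal (curvature R (Z (us ! t))) = ereal (cost t)"
  by (simp add: inverse_discriminant cost_def)

lemma Max_inverse_discriminant_plus_curvature:
  assumes "0 < n"
  shows "Max ((\<lambda>t. inverse (discriminant U Z js us t) + ereal (curvature R (Z (us ! t)))) ` {..<n})
    = ereal (Max (cost ` {..<n}))"
proof -
  have "(\<lambda>t. inverse (discriminant U Z js us t) + ereal (curvature R (Z (us ! t)))) ` {..<n}
      = ereal ` cost ` {..<n}"
    unfolding image_image by (rule image_cong) (simp_all add: inverse_discriminant_plus_curvature)
  moreover have "Max (ereal ` cost ` {..<n}) = ereal (Max (cost ` {..<n}))"
    using assms by (intro mono_Max_commute[symmetric]) (auto simp: mono_def)
  ultimately show ?thesis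
    by (simp only:)
qed

lemma Ztot_G_Suc: "k < n \<Longrightarrow> Ztot U Z (G (Suc k)) = Ztot U Z (G k) + gain k"
  unfolding Gt_Suc gain_def by (rule Ztot_insert[OF finite_U user_in_U])

context
  fixes \<Omega> :: "('u \<times> 'r) set"
  assumes partition: "is_partition U R \<Omega>"
begin

lemma partition_subset: "\<Omega> \<subseteq> U \<times> R"
  using partition unfolding is_partition_def by simp

lemma partition_owner: "r \<in> R \<Longrightarrow> \<exists>!w. (w, r) \<in> \<Omega>"
  using partition unfolding is_partition_def by simp

lemma owner_exists: "k < n \<Longrightarrow> \<exists>w. (w, js ! k) \<in> \<Omega> \<and> w \<in> U"
  using partition_owner[OF arrival_in_R] partition_subset by blast

lemma hybrid_0: "hybrid \<Omega> 0 = \<Omega>"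
  using partition_subset set_js unfolding hybrid_def future_def by (auto simp: Gt_0)

lemma hybrid_n: "hybrid \<Omega> n = G n"
  unfolding hybrid_def future_def by simp

lemma future_Suc:
  assumes k: "k < n" and owner: "(w, js ! k) \<in> \<Omega>"
  shows "future \<Omega> k = insert (w, js ! k) (future \<Omega> (Suc k))"
proof -
  have "drop k js = js ! k # drop (Suc k) js"
    using Cons_nth_drop_Suc[OF k] by simp
  then have "future \<Omega> k = {p \<in> \<Omega>. snd p = js ! k} \<union> future \<Omega> (Suc k)"
    unfolding future_def by auto
  moreover have "{p \<in> \<Omega>. snd p = js ! k} = {(w, js ! k)}"
  proof -
    have owner_unique: "v = w" if "(v, js ! k) \<in> \<Omega>" for v
      using partition_owner[OF arrival_in_R[OF k]] owner that by blast
    show ?thesis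
    proof (rule set_eqI)
      fix p :: "'u \<times> 'r"
      show "p \<in> {p \<in> \<Omega>. snd p = js ! k} \<longleftrightarrow> p \<in> {(w, js ! k)}"
        using owner owner_unique[of "fst p"] by (cases p) auto
    qed
  qed
  ultimately show ?thesis
    by simp
qed

lemma user_part_future_subset: "k \<le> n \<Longrightarrow> user_part (G k \<union> future \<Omega> (Suc k)) v \<subseteq> R"
  using partition_subset user_part_G_subset[of k v] unfolding future_def user_part_def by auto

lemma arrival_not_in_future: "k < n \<Longrightarrow> js ! k \<notin> user_part (G k \<union> future \<Omega> (Suc k)) v"
  using arrival_not_in_G[of k v] arrival_not_in_future_Suc[of k]
  unfolding future_def user_part_def by auto

lemma hybrid_step:
  assumes k: "k < n"
  shows "(1 - max 1 (cost k)) * gain k \<le> Ztot U Z (hybrid \<Omega> (Suc k)) - Ztot U Z (hybrid \<Omega> k)"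
proof -
  define u j S where "u = us ! k" and "j = js ! k" and "S = G k \<union> future \<Omega> (Suc k)"
  obtain w where w: "(w, j) \<in> \<Omega>" "w \<in> U"
    using owner_exists[OF k] unfolding j_def by blast
  have u: "u \<in> U"
    using user_in_U[OF k] unfolding u_def .
  have j: "j \<in> R - user_part S v" for v
    using arrival_in_R[OF k] arrival_not_in_future[OF k] unfolding j_def S_def by blast
  have S_R: "user_part S v \<subseteq> R" for v
    using user_part_future_subset k unfolding S_def by simp
  have "hybrid \<Omega> (Suc k) = insert (u, j) S" "hybrid \<Omega> k = insert (w, j) S"
    using future_Suc[OF k] w unfolding hybrid_def S_def u_def j_def by (auto simp: Gt_Suc)
  then have diff: "Ztot U Z (hybrid \<Omega> (Suc k)) - Ztot U Z (hybrid \<Omega> k) = rho Z u j S - rho Z w j S"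
    using Ztot_insert[OF finite_U u, of Z j S] Ztot_insert[OF finite_U w(2), of Z j S] by simp
  have gain_u: "(1 - curvature R (Z u)) * gain k \<le> rho Z u j S"
    using rho_curvature_lower_bound[of R Z u "G k" S j] submod u finite_R S_R j
    unfolding gain_def u_def j_def S_def by auto
  show ?thesis
  proof (cases "w = u")
    case True
    then show ?thesis
      using diff gain_nonneg[OF k] by (simp add: mult_nonpos_nonneg)
  next
    case False
    have "rho Z w j S \<le> rho Z w j (G k)"
      using rho_antimono[of R Z w "G k" S j] submod w(2) S_R j unfolding S_def by auto
    also have "\<dots> \<le> rival_ratio k * gain k"
      using rival_ge[OF k] rival_le_ratio_gain[OF k] False w(2) unfolding u_def j_def by fastforce
    finally have "(1 - cost k) * gain k \<le> rho Z u j S - rho Z w j S"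
      using gain_u unfolding cost_def u_def by (simp add: algebra_simps)
    moreover have "(1 - max 1 (cost k)) * gain k \<le> (1 - cost k) * gain k"
      using gain_nonneg[OF k] by (simp add: mult_right_mono)
    ultimately show ?thesis
      using diff by linarith
  qed
qed

lemma hybrid_potential:
  assumes K: "\<forall>t<n. max 1 (cost t) \<le> K" and "k \<le> n"
  shows "Ztot U Z \<Omega> - (K - 1) * Ztot U Z (G k) \<le> Ztot U Z (hybrid \<Omega> k)"
  using \<open>k \<le> n\<close>
proof (induction k)
  case 0
  then show ?case
    using Ztot_empty[OF submod] by (simp add: hybrid_0 Gt_0)
next
  case (Suc k)
  then have k: "k < n" by simp
  have "(1 - K) * gain k \<le> (1 - max 1 (cost k)) * gain k"
    using K gain_nonneg[OF k] k by (simp add: mult_right_mono)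
  then show ?case
    using Suc hybrid_step[OF k] Ztot_G_Suc[OF k] by (simp add: algebra_simps)
qed

lemma partition_value_le_greedy:
  "Ztot U Z \<Omega> \<le> max 1 (Max (cost ` {..<n})) * Ztot U Z (G n)"
proof -
  have "cost t \<le> Max (cost ` {..<n})" if "t < n" for t
    using that by (intro Max_ge) auto
  then have "\<forall>t<n. max 1 (cost t) \<le> max 1 (Max (cost ` {..<n}))"
    by (auto intro: max.coboundedI2)
  from hybrid_potential[OF this order.refl] show ?thesis
    unfolding hybrid_n by (simp add: left_diff_distrib)
qed

end

end

theorem theorem5:
  fixes U :: "'u set" and R :: "'r set" and Z :: "'u \<Rightarrow> 'r set \<Rightarrow> real"
    and \<Omega> :: "('u \<times> 'r) set" and js :: "'r list" and us :: "'u list"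
  assumes "finite U" and "card U \<ge> 2" and "finite R"
    and "\<forall>u\<in>U. monotone_submod R (Z u)"
    and "optimal_partition U R Z \<Omega>" and "Ztot U Z \<Omega> > 0"
    and "distinct js" and "set js = R"
    and "greedy_on_run U R Z js us"
  shows "ereal (Ztot U Z (Gt us js (length js)) / Ztot U Z \<Omega>) \<ge>
           min 1 (inverse (Max ((\<lambda>t. inverse (discriminant U Z js us t)
                                    + ereal (curvature R (Z (us ! t)))) ` {..<length js})))"
proof -
  interpret greedy_on U R Z js us
    using assms by unfold_locales
  have partition: "is_partition U R \<Omega>"
    using assms(5) unfolding optimal_partition_def by blast
  have "0 < n"
  proof (rule ccontr)
    assume "\<not> 0 < n"
    then have "\<Omega> = {}"
      using partition set_js unfolding is_partition_def by auto
    then show False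
      using assms(6) Ztot_empty[OF submod] by simp
  qed
  show ?thesis
    unfolding Max_inverse_discriminant_plus_curvature[OF \<open>0 < n\<close>]
    by (rule ereal_ratio_ge_min_1_inverse[OF assms(6) partition_value_le_greedy[OF partition]])
qed

end
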